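(* Let $\mathcal P$ be a finite subset of $\mathcal W$ and let $P(1),P(2),P(3),\ldots$ be a sequence of matrices from $\mathcal P$. Suppose $j_1<j_2<\cdots$ is an infinite increasing sequence of indices such that each $P(j_r)$ is a Sarymsakov matrix. If there exists an integer $T$ such that $j_{r+1}-j_r\le T$ for all $r\ge1$, then $P(k)\cdots P(1)$ converges as $k\to\infty$ to a rank-one matrix $\mathbf 1c^T$ with $c_i\ge0$ and $\sum_i c_i=1$.
   Context: Let $\mathcal N=\{1,\ldots,n\}$; all matrices are $n\times n$. A matrix is stochastic if it is entrywise nonnegative with row sums $1$. For stochastic $P$ and $\mathcal A\subseteq\mathcal N$, $F_P(\mathcal A)=\{j:\ p_{ij}>0\text{ for some } i\in\mathcal A\}$. A Sarymsakov matrix is a stochastic $P$ such that for any disjoint nonempty $\mathcal A,\tilde{\mathcal A}\subseteq\mathcal N$, either $F_P(\mathcal A)\cap F_P(\tilde{\mathcal A})\neq\emptyset$, or $F_P(\mathcal A)\cap F_P(\tilde{\mathcal A})=\emptyset$ and $|F_P(\mathcal A)\cup F_P(\tilde{\mathcal A})|>|\mathcal A\cup\tilde{\mathcal A}|$. $\mathcal W$ is the set of stochastic $P$ such that for any disjoint nonempty $\mathcal A,\tilde{\mathcal A}\subseteq\mathcal N$, either $F_P(\mathcal A)\cap F_P(\tilde{\mathcal A})\neq\emptyset$, or $F_P(\mathcal A)\cap F_P(\tilde{\mathcal A})=\emptyset$ and $|F_P(\mathcal A)\cup F_P(\tilde{\mathcal A})|\ge|\mathcal A\cup\tilde{\mathcal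 A}|$. $\mathbf 1$ is the all-ones column vector. *)

theory Defs
  imports "HOL-Analysis.Analysis"
begin

definition stochastic :: "real^'n^'n \<Rightarrow> bool" where
  "stochastic P \<longleftrightarrow> (\<forall>i j. P $ i $ j \<ge> 0) \<and> (\<forall>i. (\<Sum>j\<in>UNIV. P $ i $ j) = 1)"

definition succ_set :: "real^'n^'n \<Rightarrow> 'n set \<Rightarrow> 'n set" where
  "succ_set P A = {j. \<exists>i\<in>A. P $ i $ j > 0}"

definition sarymsakov :: "real^'n^'n \<Rightarrow> bool" where
  "sarymsakov P \<longleftrightarrow> stochastic P \<and>
     (\<forall>A B. A \<noteq> {} \<and> B \<noteq> {} \<and> A \<inter> B = {} \<longrightarrow>
        succ_set P A \<inter> succ_set P B \<noteq> {} \<or>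
        (succ_set P A \<inter> succ_set P B = {} \<and>
         card (succ_set P A \<union> succ_set P B) > card (A \<union> B)))"

definition classW :: "(real^'n^'n) set" where
  "classW = {P. stochastic P \<and>
     (\<forall>A B. A \<noteq> {} \<and> B \<noteq> {} \<and> A \<inter> B = {} \<longrightarrow>
        succ_set P A \<inter> succ_set P B \<noteq> {} \<or>
        (succ_set P A \<inter> succ_set P B = {} \<and>
         card (succ_set P A \<union> succ_set P B) \<ge> card (A \<union> B)))}"

fun lprod :: "(nat \<Rightarrow> real^'n^'n) \<Rightarrow> nat \<Rightarrow> real^'n^'n" where
  "lprod P 0 = mat 1"
| "lprod P (Suc k) = P (Suc k) ** lprod P k"

end

theory Submission
  imports Defs
begin

(* Read the defining conditions of W and of Sarymsakov matrices quantitatively: X expands by t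
   if, whenever two disjoint nonempty index sets have disjoint successor sets, these successor
   sets together have at least t more elements.  Matrices in W expand by 0, Sarymsakov matrices
   by 1, and the amounts add up under products.  A product containing n = CARD('n) Sarymsakov
   factors therefore expands by n, which forces any two of its rows to share a positive column.
   Cut the factors into consecutive blocks containing n Sarymsakov factors each; such a block has
   length at most n T, so with mu the least positive entry occurring in the finite set of
   factors, the shared entries are at least eta = mu ^ (n T).  Multiplication by a stochastic
   matrix never increases the spread max - min of a vector, and by such a block it shrinks the
   spread by the factor 1 - eta.  Hence every column of P(k) ... P(1) tends to a constant vector,
   and the limit is 1 c^T with c a probability vector. *)

lemma stochastic_nonneg: "stochastic X \<Longrightarrow> 0 \<le> X $ i $ j"
  by (simp add: stochastic_def)

lemma stochastic_row_sum: "stochastic X \<Longrightarrow> (\<Sum>j\<in>UNIV. X $ i $ j) = 1"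
  by (simp add: stochastic_def)

lemma stochastic_entry_le_1:
  assumes "stochastic X"
  shows "X $ i $ j \<le> 1"
proof -
  have "X $ i $ j \<le> (\<Sum>j\<in>UNIV. X $ i $ j)"
    by (rule member_le_sum) (auto simp: stochastic_nonneg[OF assms])
  with stochastic_row_sum[OF assms] show ?thesis by simp
qed

lemma stochastic_mat1: "stochastic (mat 1)"
  by (simp add: stochastic_def mat_def)

lemma stochastic_mult:
  assumes "stochastic X" "stochastic Y"
  shows "stochastic (X ** Y)"
proof -
  have "(\<Sum>k\<in>UNIV. (X ** Y) $ i $ k) = (\<Sum>m\<in>UNIV. X $ i $ m * (\<Sum>k\<in>UNIV. Y $ m $ k))" for i
    unfolding matrix_matrix_mult_def by (simp add: sum_distrib_left) (rule sum.swap)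
  with assms show ?thesis
    by (auto simp: stochastic_def matrix_matrix_mult_def intro!: sum_nonneg)
qed

lemma stochastic_mult_pos_iff:
  assumes "stochastic X" "stochastic Y"
  shows "0 < (X ** Y) $ i $ k \<longleftrightarrow> (\<exists>m. 0 < X $ i $ m \<and> 0 < Y $ m $ k)"
proof -
  have nonneg: "0 \<le> X $ i $ m * Y $ m $ k" for m
    using assms by (simp add: stochastic_nonneg)
  have "0 < (X ** Y) $ i $ k \<longleftrightarrow> (\<exists>m. X $ i $ m * Y $ m $ k \<noteq> 0)"
    using sum_nonneg_eq_0_iff[of UNIV "\<lambda>m. X $ i $ m * Y $ m $ k"]
      sum_nonneg[of UNIV "\<lambda>m. X $ i $ m * Y $ m $ k"]
    by (auto simp: matrix_matrix_mult_def nonneg order_less_le)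
  also have "\<dots> \<longleftrightarrow> (\<exists>m. 0 < X $ i $ m \<and> 0 < Y $ m $ k)"
    using assms by (auto simp: order_less_le stochastic_nonneg)
  finally show ?thesis .
qed

lemma succ_set_mult:
  assumes "stochastic X" "stochastic Y"
  shows "succ_set (X ** Y) A = succ_set Y (succ_set X A)"
  by (auto simp: succ_set_def stochastic_mult_pos_iff[OF assms])

lemma succ_set_nonempty:
  assumes "stochastic X" "A \<noteq> {}"
  shows "succ_set X A \<noteq> {}"
proof -
  obtain i where "i \<in> A" using assms(2) by blast
  have "\<exists>k. 0 < X $ i $ k"
    using stochastic_row_sum[OF assms(1), of i] stochastic_nonneg[OF assms(1), of i]
      sum_nonneg_eq_0_iff[of UNIV "\<lambda>k. X $ i $ k"] by (force simp: order_less_le)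
  with \<open>i \<in> A\<close> show ?thesis by (auto simp: succ_set_def)
qed

lemma succ_set_mono: "A \<subseteq> B \<Longrightarrow> succ_set X A \<subseteq> succ_set X B"
  by (auto simp: succ_set_def)

lemma lprod_stochastic: "(\<And>k. k \<in> {1..d} \<Longrightarrow> stochastic (P k)) \<Longrightarrow> stochastic (lprod P d)"
  by (induction d) (auto simp: stochastic_mat1 intro!: stochastic_mult)

lemma lprod_add: "lprod P (a + d) = lprod (\<lambda>k. P (a + k)) d ** lprod P a"
  by (induction d) (simp_all add: matrix_mul_assoc)

definition expands_by :: "real^'n^'n \<Rightarrow> nat \<Rightarrow> bool" where
  "expands_by X t \<longleftrightarrow> stochastic X \<and>
     (\<forall>A B. A \<noteq> {} \<and> B \<noteq> {} \<and> A \<inter> B = {} \<and> succ_set X A \<inter> succ_set X B = {} \<longrightarrow>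
        card (A \<union> B) + t \<le> card (succ_set X A \<union> succ_set X B))"

lemma classW_expands_by_0: "X \<in> classW \<Longrightarrow> expands_by X 0"
  unfolding expands_by_def classW_def by auto

lemma sarymsakov_expands_by_1: "sarymsakov X \<Longrightarrow> expands_by X 1"
  unfolding expands_by_def sarymsakov_def by (metis Suc_eq_plus1 Suc_leI)

lemma expands_by_mat1: "expands_by (mat 1 :: real^'n^'n) 0"
proof -
  have "succ_set (mat 1) A = A" for A :: "'n::finite set"
    by (auto simp: succ_set_def mat_def)
  then show ?thesis by (simp add: expands_by_def stochastic_mat1)
qed

lemma expands_by_mult:
  assumes "expands_by X s" "expands_by Y t"
  shows "expands_by (X ** Y) (s + t)"
  unfolding expands_by_def
proof (intro conjI allI impI)
  have X: "stochastic X" and Y: "stochastic Y" using assms by (auto simp: expands_by_def)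
  show "stochastic (X ** Y)" using X Y by (rule stochastic_mult)
  fix A B
  assume AB: "A \<noteq> {} \<and> B \<noteq> {} \<and> A \<inter> B = {} \<and> succ_set (X ** Y) A \<inter> succ_set (X ** Y) B = {}"
  let ?A = "succ_set X A" and ?B = "succ_set X B"
  have disjoint_YAB: "succ_set Y ?A \<inter> succ_set Y ?B = {}"
    using AB by (simp add: succ_set_mult[OF X Y])
  have nonempty: "?A \<noteq> {}" "?B \<noteq> {}" using AB succ_set_nonempty[OF X] by auto
  have disjoint_AB: "?A \<inter> ?B = {}"
  proof (rule ccontr)
    assume "?A \<inter> ?B \<noteq> {}"
    then obtain k where "k \<in> ?A" "k \<in> ?B" by blast
    then have "succ_set Y {k} \<subseteq> succ_set Y ?A \<inter> succ_set Y ?B"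
      by (auto intro!: succ_set_mono)
    with disjoint_YAB succ_set_nonempty[OF Y] show False by blast
  qed
  have "card (A \<union> B) + s \<le> card (?A \<union> ?B)"
    using assms(1) AB disjoint_AB unfolding expands_by_def by blast
  moreover have "card (?A \<union> ?B) + t \<le> card (succ_set Y ?A \<union> succ_set Y ?B)"
    using assms(2) nonempty disjoint_AB disjoint_YAB unfolding expands_by_def by blast
  ultimately show "card (A \<union> B) + (s + t) \<le> card (succ_set (X ** Y) A \<union> succ_set (X ** Y) B)"
    by (simp add: succ_set_mult[OF X Y])
qed

lemma expands_by_common_successor:
  assumes "expands_by (X :: real^'n^'n) t" "CARD('n) \<le> t"
  shows "\<exists>k. 0 < X $ i $ k \<and> 0 < X $ i' $ k"
proof (rule ccontr)
  assume no_common: "\<not> ?thesis"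
  have X: "stochastic X" using assms(1) by (simp add: expands_by_def)
  have "i \<noteq> i'"
    using no_common succ_set_nonempty[OF X, of "{i}"] by (auto simp: succ_set_def)
  moreover have "succ_set X {i} \<inter> succ_set X {i'} = {}"
    using no_common by (auto simp: succ_set_def)
  ultimately have "card ({i} \<union> {i'}) + t \<le> card (succ_set X {i} \<union> succ_set X {i'})"
    using assms(1) unfolding expands_by_def by blast
  moreover have "card (succ_set X {i} \<union> succ_set X {i'}) \<le> CARD('n)"
    by (rule card_mono) auto
  ultimately show False using \<open>i \<noteq> i'\<close> assms(2) by simp
qed

lemma lprod_expands_by:
  assumes "\<And>k. k \<in> {1..d} \<Longrightarrow> Q k \<in> classW"
  shows "expands_by (lprod Q d) (card {k \<in> {1..d}. sarymsakov (Q k)})"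
  using assms
proof (induction d)
  case 0
  then show ?case by (simp add: expands_by_mat1)
next
  case (Suc d)
  let ?S = "\<lambda>d. {k \<in> {1..d}. sarymsakov (Q k)}"
  let ?s = "if sarymsakov (Q (Suc d)) then 1 else 0"
  have "?S (Suc d) = (if sarymsakov (Q (Suc d)) then insert (Suc d) (?S d) else ?S d)"
    by (auto simp: le_Suc_eq)
  then have count: "card (?S (Suc d)) = ?s + card (?S d)"
    by simp
  have "expands_by (Q (Suc d)) ?s"
    using Suc.prems[of "Suc d"] sarymsakov_expands_by_1 classW_expands_by_0 by auto
  from expands_by_mult[OF this Suc.IH] Suc.prems show ?case
    unfolding count by simp
qed

lemma lprod_entry_ge_power:
  assumes "\<And>k. k \<in> {1..d} \<Longrightarrow> stochastic (Q k)"
    and "\<And>k i j. k \<in> {1..d} \<Longrightarrow> 0 < Q k $ i $ j \<Longrightarrow> \<mu> \<le> Q k $ i $ j"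
    and "0 \<le> \<mu>" and "0 < lprod Q d $ i $ j"
  shows "\<mu> ^ d \<le> lprod Q d $ i $ j"
  using assms(1,2,4)
proof (induction d arbitrary: i j)
  case 0
  then show ?case by (simp add: mat_def split: if_splits)
next
  case (Suc d)
  have Q: "stochastic (Q (Suc d))" and L: "stochastic (lprod Q d)"
    using Suc.prems(1) by (auto intro!: lprod_stochastic)
  obtain m where m: "0 < Q (Suc d) $ i $ m" "0 < lprod Q d $ m $ j"
    using Suc.prems(3) stochastic_mult_pos_iff[OF Q L] by auto
  have "\<mu> * \<mu> ^ d \<le> Q (Suc d) $ i $ m * lprod Q d $ m $ j"
    using Suc m assms(3) by (intro mult_mono) (auto simp: less_imp_le)
  also have "\<dots> \<le> (Q (Suc d) ** lprod Q d) $ i $ j"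
    unfolding matrix_matrix_mult_def
    using Q L by (auto intro!: member_le_sum simp: stochastic_nonneg)
  finally show ?case by simp
qed

definition scrambling :: "real \<Rightarrow> real^'n^'n \<Rightarrow> bool" where
  "scrambling \<eta> X \<longleftrightarrow> (\<forall>i i'. \<exists>k. \<eta> \<le> X $ i $ k \<and> \<eta> \<le> X $ i' $ k)"

lemma scrambling_antimono: "scrambling \<eta> X \<Longrightarrow> \<eta>' \<le> \<eta> \<Longrightarrow> scrambling \<eta>' X"
  unfolding scrambling_def by (meson order_trans)

lemma scrambling_le_1: "scrambling \<eta> X \<Longrightarrow> stochastic X \<Longrightarrow> \<eta> \<le> 1"
  unfolding scrambling_def by (meson order_trans stochastic_entry_le_1)

lemma lprod_scrambling:
  assumes "\<And>k. k \<in> {1..d} \<Longrightarrow> Q k \<in> classW"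
    and "\<And>k i j. k \<in> {1..d} \<Longrightarrow> 0 < Q k $ i $ j \<Longrightarrow> \<mu> \<le> Q k $ i $ j"
    and "0 \<le> \<mu>" and "CARD('n) \<le> card {k \<in> {1..d}. sarymsakov (Q k)}"
  shows "scrambling (\<mu> ^ d) (lprod Q d :: real^'n^'n)"
  unfolding scrambling_def
proof (intro allI)
  fix i i'
  have "\<And>k. k \<in> {1..d} \<Longrightarrow> stochastic (Q k)"
    using assms(1) by (simp add: classW_def)
  moreover obtain k where "0 < lprod Q d $ i $ k" "0 < lprod Q d $ i' $ k"
    using expands_by_common_successor[OF lprod_expands_by[OF assms(1)] assms(4)] by blast
  ultimately show "\<exists>k. \<mu> ^ d \<le> lprod Q d $ i $ k \<and> \<mu> ^ d \<le> lprod Q d $ i' $ k"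
    using lprod_entry_ge_power[of d Q \<mu>] assms(2,3) by blast
qed

definition vmax :: "real^'n \<Rightarrow> real" where
  "vmax y = Max (range (($) y))"

definition vmin :: "real^'n \<Rightarrow> real" where
  "vmin y = Min (range (($) y))"

lemma vmax_ge: "y $ i \<le> vmax y"
  unfolding vmax_def by (rule Max_ge) auto

lemma vmin_le: "vmin y \<le> y $ i"
  unfolding vmin_def by (rule Min_le) auto

lemma vmax_attained: "\<exists>i. vmax y = y $ i"
proof -
  have "Max (range (($) y)) \<in> range (($) y)" by (rule Max_in) auto
  then show ?thesis unfolding vmax_def by blast
qed

lemma vmin_attained: "\<exists>i. vmin y = y $ i"
proof -
  have "Min (range (($) y)) \<in> range (($) y)" by (rule Min_in) auto
  then show ?thesis unfolding vmin_def by blast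
qed

lemma stochastic_mult_vec_bounds:
  assumes "stochastic X" "\<And>m. lo \<le> y $ m" "\<And>m. y $ m \<le> hi"
  shows "lo \<le> (X *v y) $ i" "(X *v y) $ i \<le> hi"
proof -
  have "(\<Sum>m\<in>UNIV. X $ i $ m * lo) \<le> (\<Sum>m\<in>UNIV. X $ i $ m * y $ m)"
    "(\<Sum>m\<in>UNIV. X $ i $ m * y $ m) \<le> (\<Sum>m\<in>UNIV. X $ i $ m * hi)"
    using assms by (auto intro!: sum_mono mult_left_mono simp: stochastic_nonneg)
  then show "lo \<le> (X *v y) $ i" "(X *v y) $ i \<le> hi"
    using stochastic_row_sum[OF assms(1)]
    by (simp_all add: matrix_vector_mult_def sum_distrib_right[symmetric])
qed

lemma vmax_stochastic_mult_le: "stochastic X \<Longrightarrow> vmax (X *v y) \<le> vmax y"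
  using vmax_attained[of "X *v y"] stochastic_mult_vec_bounds[of X "vmin y" y "vmax y"]
  by (metis vmax_ge vmin_le)

lemma vmin_stochastic_mult_ge: "stochastic X \<Longrightarrow> vmin y \<le> vmin (X *v y)"
  using vmin_attained[of "X *v y"] stochastic_mult_vec_bounds[of X "vmin y" y "vmax y"]
  by (metis vmax_ge vmin_le)

text \<open>Both rows put weight at least \<open>\<eta>\<close> on the same coordinate \<open>k\<close>: row \<open>i\<close> therefore
  stays \<open>\<eta> (hi - y$k)\<close> below \<open>hi\<close> and row \<open>i'\<close> stays \<open>\<eta> (y$k - lo)\<close> above \<open>lo\<close>.\<close>
lemma stochastic_mult_rows_diff:
  assumes "stochastic X" "\<And>m. lo \<le> y $ m" "\<And>m. y $ m \<le> hi"
    and "\<eta> \<le> X $ i $ k" "\<eta> \<le> X $ i' $ k"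
  shows "(X *v y) $ i - (X *v y) $ i' \<le> (1 - \<eta>) * (hi - lo)"
proof -
  have rows: "(X *v y) $ p = (\<Sum>m\<in>UNIV. X $ p $ m * y $ m)" for p
    by (simp add: matrix_vector_mult_def)
  have upper: "(X *v y) $ i = hi - (\<Sum>m\<in>UNIV. X $ i $ m * (hi - y $ m))"
    using stochastic_row_sum[OF assms(1), of i]
    by (simp add: rows right_diff_distrib sum_subtractf sum_distrib_right[symmetric])
  have "\<eta> * (hi - y $ k) \<le> X $ i $ k * (hi - y $ k)"
    using assms(3,4) by (intro mult_right_mono) auto
  also have "\<dots> \<le> (\<Sum>m\<in>UNIV. X $ i $ m * (hi - y $ m))"
    using assms(1,3) by (intro member_le_sum) (auto simp: stochastic_nonneg)
  finally have i: "(X *v y) $ i \<le> hi - \<eta> * (hi - y $ k)"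
    using upper by linarith
  have lower: "(X *v y) $ i' = lo + (\<Sum>m\<in>UNIV. X $ i' $ m * (y $ m - lo))"
    using stochastic_row_sum[OF assms(1), of i']
    by (simp add: rows right_diff_distrib sum_subtractf sum_distrib_right[symmetric])
  have "\<eta> * (y $ k - lo) \<le> X $ i' $ k * (y $ k - lo)"
    using assms(2,5) by (intro mult_right_mono) auto
  also have "\<dots> \<le> (\<Sum>m\<in>UNIV. X $ i' $ m * (y $ m - lo))"
    using assms(1,2) by (intro member_le_sum) (auto simp: stochastic_nonneg)
  finally have i': "lo + \<eta> * (y $ k - lo) \<le> (X *v y) $ i'"
    using lower by linarith
  from i i' show ?thesis by (simp add: algebra_simps)
qed

lemma scrambling_contracts_spread:
  assumes "stochastic X" "scrambling \<eta> X"
  shows "vmax (X *v y) - vmin (X *v y) \<le> (1 - \<eta>) * (vmax y - vmin y)"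
proof -
  obtain i i' where "vmax (X *v y) = (X *v y) $ i" "vmin (X *v y) = (X *v y) $ i'"
    using vmax_attained vmin_attained by metis
  moreover obtain k where "\<eta> \<le> X $ i $ k" "\<eta> \<le> X $ i' $ k"
    using assms(2) by (auto simp: scrambling_def)
  ultimately show ?thesis
    using stochastic_mult_rows_diff[OF assms(1) vmin_le vmax_ge] by simp
qed

lemma decseq_incseq_common_limit:
  fixes U L :: "nat \<Rightarrow> real"
  assumes "decseq U" "incseq L" "\<And>k. L k \<le> U k" "\<And>e. 0 < e \<Longrightarrow> \<exists>k. U k - L k < e"
  shows "\<exists>u. U \<longlonglongrightarrow> u \<and> L \<longlonglongrightarrow> u"
proof -
  have "(\<lambda>k. U k - L k) \<longlonglongrightarrow> 0"
  proof (rule order_tendstoI)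
    fix e :: real
    assume "e < 0"
    then show "\<forall>\<^sub>F k in sequentially. e < U k - L k"
      using assms(3) by (auto intro!: always_eventually simp: less_le_trans)
  next
    fix e :: real
    assume "0 < e"
    then obtain k where k: "U k - L k < e" using assms(4) by blast
    have "U n - L n < e" if "k \<le> n" for n
      using decseqD[OF assms(1) that] incseqD[OF assms(2) that] k by linarith
    then show "\<forall>\<^sub>F n in sequentially. U n - L n < e"
      by (auto simp: eventually_sequentially)
  qed
  then have "(\<lambda>k. L k - U k) \<longlonglongrightarrow> 0"
    using tendsto_minus[of "\<lambda>k. U k - L k" 0] by simp
  with assms(1-3) show ?thesis
    using nested_sequence_unique[of L U] by (auto simp: incseq_SucD decseq_SucD)
qed

lemma lprod_mult_vec_spread_monotone:
  assumes "\<forall>k\<ge>1. stochastic (P k)"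
  shows "decseq (\<lambda>k. vmax (lprod P k *v y))" "incseq (\<lambda>k. vmin (lprod P k *v y))"
proof -
  have step: "lprod P (Suc k) *v y = P (Suc k) *v (lprod P k *v y)" for k
    by (simp add: matrix_vector_mul_assoc)
  show "decseq (\<lambda>k. vmax (lprod P k *v y))"
    by (rule decseq_SucI) (simp add: step vmax_stochastic_mult_le assms del: lprod.simps)
  show "incseq (\<lambda>k. vmin (lprod P k *v y))"
    by (rule incseq_SucI) (simp add: step vmin_stochastic_mult_ge assms del: lprod.simps)
qed

lemma lprod_mult_vec_spread_blocks:
  fixes a :: "nat \<Rightarrow> nat"
  assumes "\<forall>k\<ge>1. stochastic (P k)" "mono a"
    and "\<forall>s. scrambling \<eta> (lprod (\<lambda>k. P (a s + k)) (a (Suc s) - a s))"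
  shows "vmax (lprod P (a s) *v y) - vmin (lprod P (a s) *v y) \<le> (1 - \<eta>) ^ s * (vmax y - vmin y)"
proof (induction s)
  case 0
  note monotone = lprod_mult_vec_spread_monotone[OF assms(1), of y]
  have "vmax (lprod P (a 0) *v y) \<le> vmax (lprod P 0 *v y)"
    by (rule decseqD[OF monotone(1)]) simp
  moreover have "vmin (lprod P 0 *v y) \<le> vmin (lprod P (a 0) *v y)"
    by (rule incseqD[OF monotone(2)]) simp
  ultimately show ?case
    by simp
next
  case (Suc s)
  define B where "B = lprod (\<lambda>k. P (a s + k)) (a (Suc s) - a s)"
  have B: "stochastic B"
    unfolding B_def using assms(1) by (intro lprod_stochastic) auto
  have "lprod P (a (Suc s)) = B ** lprod P (a s)"
    using lprod_add[of P "a s" "a (Suc s) - a s"] monoD[OF assms(2), of s "Suc s"]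
    by (simp add: B_def)
  then have "vmax (lprod P (a (Suc s)) *v y) - vmin (lprod P (a (Suc s)) *v y)
      \<le> (1 - \<eta>) * (vmax (lprod P (a s) *v y) - vmin (lprod P (a s) *v y))"
    using scrambling_contracts_spread[OF B assms(3)[rule_format, of s, folded B_def]]
    by (simp add: matrix_vector_mul_assoc[symmetric])
  also have "\<dots> \<le> (1 - \<eta>) * ((1 - \<eta>) ^ s * (vmax y - vmin y))"
    using Suc.IH scrambling_le_1[OF assms(3)[rule_format, of s, folded B_def] B]
    by (intro mult_left_mono) auto
  finally show ?case by (simp add: mult.assoc)
qed

lemma lprod_mult_vec_consensus:
  fixes a :: "nat \<Rightarrow> nat"
  assumes "\<forall>k\<ge>1. stochastic (P k)" "mono a" "0 < \<eta>"
    and "\<forall>s. scrambling \<eta> (lprod (\<lambda>k. P (a s + k)) (a (Suc s) - a s))"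
  shows "\<exists>u. \<forall>i. (\<lambda>k. (lprod P k *v y) $ i) \<longlonglongrightarrow> u"
proof -
  define U where "U k = vmax (lprod P k *v y)" for k
  define L where "L k = vmin (lprod P k *v y)" for k
  have "\<exists>k. U k - L k < e" if "0 < e" for e
  proof -
    have "stochastic (lprod (\<lambda>k. P (a 0 + k)) (a (Suc 0) - a 0))"
      using assms(1) by (intro lprod_stochastic) auto
    then have "\<eta> \<le> 1"
      using assms(4) scrambling_le_1 by blast
    then have "(\<lambda>s. (1 - \<eta>) ^ s * (vmax y - vmin y)) \<longlonglongrightarrow> 0"
      using assms(3) by (intro tendsto_mult_left_zero LIMSEQ_power_zero) auto
    then have "\<forall>\<^sub>F s in sequentially. (1 - \<eta>) ^ s * (vmax y - vmin y) < e"
      using that by (rule order_tendstoD(2))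
    then obtain s where "(1 - \<eta>) ^ s * (vmax y - vmin y) < e"
      by (auto simp: eventually_sequentially)
    moreover have "U (a s) - L (a s) \<le> (1 - \<eta>) ^ s * (vmax y - vmin y)"
      unfolding U_def L_def by (rule lprod_mult_vec_spread_blocks[OF assms(1,2,4)])
    ultimately show ?thesis
      by (meson le_less_trans)
  qed
  moreover have "L k \<le> U k" for k
    unfolding L_def U_def by (meson order_trans vmin_le vmax_ge)
  moreover have "decseq U" "incseq L"
    unfolding U_def L_def using lprod_mult_vec_spread_monotone[OF assms(1)] by blast+
  ultimately obtain u where lim: "U \<longlonglongrightarrow> u" "L \<longlonglongrightarrow> u"
    using decseq_incseq_common_limit[of U L] by blast
  have "(\<lambda>k. (lprod P k *v y) $ i) \<longlonglongrightarrow> u" for i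
    by (rule real_tendsto_sandwich[of L _ _ U]) (auto simp: L_def U_def vmin_le vmax_ge lim)
  then show ?thesis by blast
qed

lemma stochastic_limit:
  assumes "\<And>k. stochastic (M k)" "M \<longlonglongrightarrow> L"
  shows "stochastic L"
proof -
  have entry: "(\<lambda>k. M k $ i $ j) \<longlonglongrightarrow> L $ i $ j" for i j
    using assms(2) by (intro tendsto_vec_nth)
  have "0 \<le> L $ i $ j" for i j
    using entry by (rule LIMSEQ_le_const) (auto simp: stochastic_nonneg assms(1))
  moreover have "(\<Sum>j\<in>UNIV. L $ i $ j) = 1" for i
  proof -
    have "(\<lambda>k. \<Sum>j\<in>UNIV. M k $ i $ j) \<longlonglongrightarrow> (\<Sum>j\<in>UNIV. L $ i $ j)"
      by (intro tendsto_sum entry)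
    then show ?thesis
      by (simp add: stochastic_row_sum[OF assms(1)] LIMSEQ_const_iff)
  qed
  ultimately show ?thesis by (simp add: stochastic_def)
qed

theorem lprod_tendsto_rank_one:
  fixes a :: "nat \<Rightarrow> nat"
  assumes "\<forall>k\<ge>1. stochastic (P k)" "mono a" "0 < \<eta>"
    and "\<forall>s. scrambling \<eta> (lprod (\<lambda>k. P (a s + k)) (a (Suc s) - a s))"
  shows "\<exists>c :: real^'n. (\<forall>i. c $ i \<ge> 0) \<and> (\<Sum>i\<in>UNIV. c $ i) = 1 \<and>
           (lprod P \<longlonglongrightarrow> (\<chi> i k. c $ k))"
proof -
  have "\<exists>u. \<forall>i. (\<lambda>k. lprod P k $ i $ l) \<longlonglongrightarrow> u" for l
    using lprod_mult_vec_consensus[OF assms, of "axis l 1"]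
    by (simp add: matrix_vector_mult_basis column_def)
  then obtain c where c: "\<And>i l. (\<lambda>k. lprod P k $ i $ l) \<longlonglongrightarrow> c l"
    by metis
  have lim: "lprod P \<longlonglongrightarrow> (\<chi> i k. (\<chi> l. c l) $ k)"
    by (intro vec_tendstoI) (simp add: c)
  have "stochastic (\<chi> i k. (\<chi> l. c l) $ k :: real^'n^'n)"
    using assms(1) by (intro stochastic_limit[OF _ lim] lprod_stochastic) auto
  with lim show ?thesis
    by (intro exI[of _ "\<chi> l. c l"]) (auto simp: stochastic_def)
qed

lemma finite_matrices_positive_entries_bounded_below:
  fixes \<P> :: "(real^'n^'n) set"
  assumes "finite \<P>"
  shows "\<exists>\<mu>>0. \<mu> \<le> 1 \<and> (\<forall>Q\<in>\<P>. \<forall>i j. 0 < Q $ i $ j \<longrightarrow> \<mu> \<le> Q $ i $ j)"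
proof -
  define S where "S = {Q $ i $ j | Q i j. Q \<in> \<P> \<and> 0 < Q $ i $ j}"
  have "S \<subseteq> (\<lambda>(Q, i, j). Q $ i $ j) ` (\<P> \<times> UNIV \<times> UNIV)"
  proof
    fix z
    assume "z \<in> S"
    then obtain Q i j where "z = Q $ i $ j" "Q \<in> \<P>" unfolding S_def by blast
    then show "z \<in> (\<lambda>(Q, i, j). Q $ i $ j) ` (\<P> \<times> UNIV \<times> UNIV)"
      by (intro image_eqI[of _ _ "(Q, i, j)"]) auto
  qed
  then have "finite S"
    using assms by (auto intro: finite_subset)
  then show ?thesis
    by (intro exI[of _ "Min (insert 1 S)"]) (auto simp: S_def intro!: Min_le)
qed

lemma bounded_gaps_diff_le: "(\<And>r. j (Suc r) - j r \<le> T) \<Longrightarrow> j (r + m) - j r \<le> m * (T :: nat)"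
proof (induction m)
  case (Suc m)
  have "j (Suc (r + m)) - j (r + m) \<le> T"
    by (rule Suc.prems)
  with Suc.IH[OF Suc.prems] show ?case
    by (simp only: add_Suc_right mult_Suc)
qed simp

lemma card_sarymsakov_window:
  fixes j :: "nat \<Rightarrow> nat"
  assumes "strict_mono j" "\<And>q. sarymsakov (P (j q))" "1 \<le> j r"
  shows "m \<le> card {k \<in> {1..j (r + m) - j r}. sarymsakov (P (j r - 1 + k))}"
proof -
  let ?shift = "\<lambda>q. j q - (j r - 1)"
  let ?W = "{k \<in> {1..j (r + m) - j r}. sarymsakov (P (j r - 1 + k))}"
  have j_le: "j r \<le> j q" "j q < j (r + m)" if "q \<in> {r..<r + m}" for q
    using that strict_mono_less_eq[OF assms(1)] strict_mono_less[OF assms(1)] by auto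
  have "inj_on ?shift {r..<r + m}"
  proof (rule inj_onI)
    fix q q'
    assume q: "q \<in> {r..<r + m}" and q': "q' \<in> {r..<r + m}" and "?shift q = ?shift q'"
    with j_le(1)[OF q] j_le(1)[OF q'] have "j q = j q'"
      by linarith
    then show "q = q'"
      using strict_mono_eq[OF assms(1)] by blast
  qed
  moreover have "?shift ` {r..<r + m} \<subseteq> ?W"
  proof (rule image_subsetI)
    fix q
    assume q: "q \<in> {r..<r + m}"
    have "j r - 1 + ?shift q = j q" "1 \<le> ?shift q" "?shift q \<le> j (r + m) - j r"
      using j_le[OF q] assms(3) by arith+
    then show "?shift q \<in> ?W"
      using assms(2) by simp
  qed
  ultimately have "card (?shift ` {r..<r + m}) \<le> card ?W"
    by (intro card_mono) auto
  with \<open>inj_on ?shift {r..<r + m}\<close> show ?thesis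
    by (simp add: card_image)
qed

lemma sarymsakov_window_scrambling:
  fixes P :: "nat \<Rightarrow> real^'n^'n" and j :: "nat \<Rightarrow> nat"
  assumes "\<forall>k\<ge>1. P k \<in> classW" "\<forall>k\<ge>1. \<forall>i l. 0 < P k $ i $ l \<longrightarrow> \<mu> \<le> P k $ i $ l"
    and "0 < \<mu>" "\<mu> \<le> 1"
    and "strict_mono j" "1 \<le> j 0" "\<forall>r. sarymsakov (P (j r))" "\<forall>r. j (Suc r) - j r \<le> T"
  shows "scrambling (\<mu> ^ (CARD('n) * T)) (lprod (\<lambda>k. P (j r - 1 + k)) (j (r + CARD('n)) - j r))"
proof (rule scrambling_antimono)
  have "1 \<le> j r"
    using assms(6) strict_mono_less_eq[OF assms(5), of 0 r] by simp
  then have "CARD('n) \<le> card {k \<in> {1..j (r + CARD('n)) - j r}. sarymsakov (P (j r - 1 + k))}"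
    using card_sarymsakov_window assms(5,7) by blast
  then show "scrambling (\<mu> ^ (j (r + CARD('n)) - j r)) (lprod (\<lambda>k. P (j r - 1 + k)) (j (r + CARD('n)) - j r))"
    using assms(1-3) by (intro lprod_scrambling) auto
  show "\<mu> ^ (CARD('n) * T) \<le> \<mu> ^ (j (r + CARD('n)) - j r)"
    using bounded_gaps_diff_le[of j T r "CARD('n)"] assms(3,4,8) by (intro power_decreasing) auto
qed

theorem corollary1:
  fixes \<P> :: "(real^'n^'n) set" and P :: "nat \<Rightarrow> real^'n^'n"
    and j :: "nat \<Rightarrow> nat" and T :: nat
  assumes "finite \<P>" and "\<P> \<subseteq> classW"
    and "\<forall>k\<ge>1. P k \<in> \<P>"
    and "strict_mono j" and "j 0 \<ge> 1"
    and "\<forall>r. sarymsakov (P (j r))"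
    and "\<forall>r. j (Suc r) - j r \<le> T"
  shows "\<exists>c :: real^'n. (\<forall>i. c $ i \<ge> 0) \<and> (\<Sum>i\<in>UNIV. c $ i) = 1 \<and>
           (lprod P \<longlonglongrightarrow> (\<chi> i k. c $ k))"
proof -
  obtain \<mu> where \<mu>: "0 < \<mu>" "\<mu> \<le> 1" "\<forall>Q\<in>\<P>. \<forall>i k. 0 < Q $ i $ k \<longrightarrow> \<mu> \<le> Q $ i $ k"
    using finite_matrices_positive_entries_bounded_below[OF assms(1)] by blast
  define N where "N = CARD('n)"
  define a where "a s = j (s * N) - 1" for s
  have "mono a"
    unfolding a_def mono_def using strict_mono_less_eq[OF assms(4)] by (simp add: diff_le_mono)
  moreover have "\<forall>s. scrambling (\<mu> ^ (N * T)) (lprod (\<lambda>k. P (a s + k)) (a (Suc s) - a s))"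
  proof
    fix s
    have "j 0 \<le> j (s * N)"
      using strict_mono_less_eq[OF assms(4)] by blast
    then have "a (Suc s) - a s = j (s * N + N) - j (s * N)"
      using assms(5) by (simp add: a_def add.commute)
    then show "scrambling (\<mu> ^ (N * T)) (lprod (\<lambda>k. P (a s + k)) (a (Suc s) - a s))"
      using sarymsakov_window_scrambling[of P \<mu> j T "s * N"] assms(2-7) \<mu>
      unfolding N_def a_def by auto
  qed
  moreover have "\<forall>k\<ge>1. stochastic (P k)"
    using assms(2,3) by (auto simp: classW_def)
  ultimately show ?thesis
    using lprod_tendsto_rank_one \<mu>(1) zero_less_power by blast
qed

end
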